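(* Let $(E,\langle\cdot,\cdot\rangle,\rho,\circ)$ be a pre-Courant algebroid over $M$. Define $[\![e_1,e_2]\!]=\frac12(e_1\circ e_2-e_2\circ e_1)$ and $\mathcal J(e_1,e_2,e_3)=[\![e_1,[\![e_2,e_3]\!]]\!]+[\![e_2,[\![e_3,e_1]\!]]\!]+[\![e_3,[\![e_1,e_2]\!]]\!]$. On the complex $V_1=\Gamma(\operatorname{Ker}(\rho))\xrightarrow{i}V_0=\Gamma(E)$ ($i$ the inclusion) define $l_2(e_1,e_2)=[\![e_1,e_2]\!]$ for $e_1,e_2\in\Gamma(E)$, $l_2(e,\kappa)=[\![e,\kappa]\!]=-l_2(\kappa,e)$ for $e\in\Gamma(E)$, $\kappa\in\Gamma(\operatorname{Ker}\rho)$, and $l_3(e_1,e_2,e_3)=\mathcal J(e_1,e_2,e_3)$. Then $(V_1\xrightarrow{i}V_0,l_2,l_3)$ is a Lie 2-algebra.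
   Context: A Courant vector bundle over a smooth manifold $M$ is a vector bundle $E\to M$ with a fibrewise nondegenerate symmetric bilinear form $\langle\cdot,\cdot\rangle$ and a bundle map $\rho:E\to TM$ such that $\rho\circ\rho^*=0$, where $\rho^*:T^*M\to E^*\cong E$ is the dual of $\rho$ followed by the identification $E^*\cong E$ via $\langle\cdot,\cdot\rangle$. A pre-Courant algebroid structure on it is an $\mathbb R$-bilinear operation $\circ$ on $\Gamma(E)$ such that for all $e_1,e_2,e_3\in\Gamma(E)$: (i) $\rho(e_1\circ e_2)=[\rho(e_1),\rho(e_2)]$; (ii) $\langle e_1\circ e_1,e_2\rangle=\frac12\rho(e_2)\langle e_1,e_1\rangle$; (iii) $\rho(e_1)\langle e_2,e_3\rangle=\langle e_1\circ e_2,e_3\rangle+\langle e_2,e_1\circ e_3\rangle$. A Leibniz 2-algebra $(V_1\xrightarrow{d}V_0,l_2,l_3)$ consists of a complex of vector spaces, bilinear $l_2:V_i\times V_j\to V_{i+j}$ ($i+j\le1$) and trilinear $l_3:V_0^{3}\to V_1$ such that for all $w,x,y,z\in V_0$, $m,n\in V_1$: $d\,l_2(x,m)=l_2(x,dm)$; $d\,l_2(m,x)=l_2(dm,x)$; $l_2(dm,n)=l_2(m,dn)$; $d\,l_3(x,y,z)=l_2(x,l_2(y,z))-l_2(l_2(x,y),z)-l_2(y,l_2(x,z))$; $l_3(x,y,dm)=l_2(x,l_2(y,m))-l_2(l_2(x,y),m)-l_2(y,l_2(x,m))$; $l_3(x,dm,y)=l_2(x,l_2(m,y))-l_2(l_2(x,m),y)-l_2(m,l_2(x,y))$;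 $l_3(dm,x,y)=l_2(m,l_2(x,y))-l_2(l_2(m,x),y)-l_2(x,l_2(m,y))$; and $l_2(w,l_3(x,y,z))-l_2(x,l_3(w,y,z))+l_2(y,l_3(w,x,z))+l_2(l_3(w,x,y),z)-l_3(l_2(w,x),y,z)-l_3(x,l_2(w,y),z)-l_3(x,y,l_2(w,z))+l_3(w,l_2(x,y),z)+l_3(w,y,l_2(x,z))-l_3(w,x,l_2(y,z))=0$. A Lie 2-algebra is a Leibniz 2-algebra in which $l_2$ is skew-symmetric ($l_2(x,y)=-l_2(y,x)$, $l_2(x,m)=-l_2(m,x)$) and $l_3$ is totally skew-symmetric. *)

theory Defs
  imports Main "HOL.Real_Vector_Spaces"
begin

text \<open>
  'f plays the role of the commutative real algebra C^infinity(M);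
  'e plays the role of the C^infinity(M)-module Gamma(E) of sections;
  vector fields are the (real-linear) derivations of 'f, with the commutator
  as Lie bracket; smult is the module action of functions on sections.
\<close>

definition derivation :: "('f::{real_algebra_1,comm_ring_1} \<Rightarrow> 'f) \<Rightarrow> bool" where
  "derivation X \<longleftrightarrow> linear X \<and> (\<forall>f g. X (f * g) = f * X g + X f * g)"

definition vf_bracket :: "('f::ring \<Rightarrow> 'f) \<Rightarrow> ('f \<Rightarrow> 'f) \<Rightarrow> ('f \<Rightarrow> 'f)" where
  "vf_bracket X Y = (\<lambda>g. X (Y g) - Y (X g))"

definition one_form :: "(('f::{real_algebra_1,comm_ring_1} \<Rightarrow> 'f) \<Rightarrow> 'f) \<Rightarrow> bool" where
  "one_form \<xi> \<longleftrightarrow>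
     (\<forall>X Y. derivation X \<longrightarrow> derivation Y \<longrightarrow> \<xi> (\<lambda>g. X g + Y g) = \<xi> X + \<xi> Y) \<and>
     (\<forall>f X. derivation X \<longrightarrow> \<xi> (\<lambda>g. f * X g) = f * \<xi> X)"

definition fun_module :: "('f::{real_algebra_1,comm_ring_1} \<Rightarrow> 'e::real_vector \<Rightarrow> 'e) \<Rightarrow> bool" where
  "fun_module smult \<longleftrightarrow>
     (\<forall>f e1 e2. smult f (e1 + e2) = smult f e1 + smult f e2) \<and>
     (\<forall>f g e. smult (f + g) e = smult f e + smult g e) \<and>
     (\<forall>f g e. smult (f * g) e = smult f (smult g e)) \<and>
     (\<forall>e. smult 1 e = e) \<and>
     (\<forall>r e. scaleR r e = smult (of_real r) e)"

definition fun_linear_functional ::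
    "('f::{real_algebra_1,comm_ring_1} \<Rightarrow> 'e::real_vector \<Rightarrow> 'e) \<Rightarrow> ('e \<Rightarrow> 'f) \<Rightarrow> bool" where
  "fun_linear_functional smult \<phi> \<longleftrightarrow>
     (\<forall>e1 e2. \<phi> (e1 + e2) = \<phi> e1 + \<phi> e2) \<and> (\<forall>f e. \<phi> (smult f e) = f * \<phi> e)"

text \<open>Courant vector bundle: fibrewise nondegenerate symmetric pairing and anchor rho
  with rho o rho^* = 0.  Fibrewise nondegeneracy is expressed (Serre--Swan) by the
  pairing inducing a bijection between sections and C^infinity(M)-linear functionals.
  rho o rho^* = 0 says: whenever e = rho^*(xi), i.e. pair e e' = xi (rho e') for all e',
  then rho e = 0.\<close>
definition courant_vector_bundle ::
    "('f::{real_algebra_1,comm_ring_1} \<Rightarrow> 'e::real_vector \<Rightarrow> 'e) \<Rightarrow> ('e \<Rightarrow> 'e \<Rightarrow> 'f)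
     \<Rightarrow> ('e \<Rightarrow> 'f \<Rightarrow> 'f) \<Rightarrow> bool" where
  "courant_vector_bundle smult pair rho \<longleftrightarrow>
     fun_module smult \<and>
     (\<forall>e1 e2. pair e1 e2 = pair e2 e1) \<and>
     (\<forall>e2. fun_linear_functional smult (\<lambda>e1. pair e1 e2)) \<and>
     (\<forall>\<phi>. fun_linear_functional smult \<phi> \<longrightarrow> (\<exists>!e. pair e = \<phi>)) \<and>
     (\<forall>e. derivation (rho e)) \<and>
     (\<forall>e1 e2. rho (e1 + e2) = (\<lambda>g. rho e1 g + rho e2 g)) \<and>
     (\<forall>f e. rho (smult f e) = (\<lambda>g. f * rho e g)) \<and>
     (\<forall>\<xi>. one_form \<xi> \<longrightarrow>
        (\<forall>e. (\<forall>e'. pair e e' = \<xi> (rho e')) \<longrightarrow> rho e = (\<lambda>_. 0)))"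

definition real_bilinear :: "('a::real_vector \<Rightarrow> 'b::real_vector \<Rightarrow> 'c::real_vector) \<Rightarrow> bool" where
  "real_bilinear b \<longleftrightarrow> (\<forall>x. linear (b x)) \<and> (\<forall>y. linear (\<lambda>x. b x y))"

definition pre_courant_algebroid ::
    "('f::{real_algebra_1,comm_ring_1} \<Rightarrow> 'e::real_vector \<Rightarrow> 'e) \<Rightarrow> ('e \<Rightarrow> 'e \<Rightarrow> 'f)
     \<Rightarrow> ('e \<Rightarrow> 'f \<Rightarrow> 'f) \<Rightarrow> ('e \<Rightarrow> 'e \<Rightarrow> 'e) \<Rightarrow> bool" where
  "pre_courant_algebroid smult pair rho circ \<longleftrightarrow>
     courant_vector_bundle smult pair rho \<and>
     real_bilinear circ \<and>
     (\<forall>e1 e2. rho (circ e1 e2) = vf_bracket (rho e1) (rho e2)) \<and>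
     (\<forall>e1 e2. pair (circ e1 e1) e2 = scaleR (1/2) (rho e2 (pair e1 e1))) \<and>
     (\<forall>e1 e2 e3. rho e1 (pair e2 e3) = pair (circ e1 e2) e3 + pair e2 (circ e1 e3))"

definition skew_bracket :: "('e::real_vector \<Rightarrow> 'e \<Rightarrow> 'e) \<Rightarrow> 'e \<Rightarrow> 'e \<Rightarrow> 'e" where
  "skew_bracket circ e1 e2 = scaleR (1/2) (circ e1 e2 - circ e2 e1)"

definition jacobiator :: "('e::real_vector \<Rightarrow> 'e \<Rightarrow> 'e) \<Rightarrow> 'e \<Rightarrow> 'e \<Rightarrow> 'e \<Rightarrow> 'e" where
  "jacobiator circ e1 e2 e3 =
     skew_bracket circ e1 (skew_bracket circ e2 e3) +
     skew_bracket circ e2 (skew_bracket circ e3 e1) +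
     skew_bracket circ e3 (skew_bracket circ e1 e2)"

text \<open>A 2-term complex V1 --d--> V0 of real vector spaces (given as subspaces of
  ambient real vector spaces).  l2 is given by its three components
  l00 : V0 x V0 -> V0, l01 : V0 x V1 -> V1, l10 : V1 x V0 -> V1;
  l3 : V0^3 -> V1.\<close>

definition linear_on :: "'a::real_vector set \<Rightarrow> ('a \<Rightarrow> 'b::real_vector) \<Rightarrow> bool" where
  "linear_on A g \<longleftrightarrow> (\<forall>x\<in>A. \<forall>y\<in>A. g (x + y) = g x + g y) \<and> (\<forall>r. \<forall>x\<in>A. g (scaleR r x) = scaleR r (g x))"

definition leibniz_2_algebra ::
    "'a::real_vector set \<Rightarrow> 'b::real_vector set \<Rightarrow> ('a \<Rightarrow> 'b)
     \<Rightarrow> ('b \<Rightarrow> 'b \<Rightarrow> 'b) \<Rightarrow> ('b \<Rightarrow> 'a \<Rightarrow> 'a) \<Rightarrow> ('a \<Rightarrow> 'b \<Rightarrow> 'a)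
     \<Rightarrow> ('b \<Rightarrow> 'b \<Rightarrow> 'b \<Rightarrow> 'a) \<Rightarrow> bool" where
  "leibniz_2_algebra V1 V0 d l00 l01 l10 l3 \<longleftrightarrow>
     subspace V1 \<and> subspace V0 \<and>
     d ` V1 \<subseteq> V0 \<and> linear_on V1 d \<and>
     (\<forall>x\<in>V0. \<forall>y\<in>V0. l00 x y \<in> V0) \<and>
     (\<forall>x\<in>V0. \<forall>m\<in>V1. l01 x m \<in> V1) \<and>
     (\<forall>m\<in>V1. \<forall>x\<in>V0. l10 m x \<in> V1) \<and>
     (\<forall>x\<in>V0. \<forall>y\<in>V0. \<forall>z\<in>V0. l3 x y z \<in> V1) \<and>
     (\<forall>x\<in>V0. linear_on V0 (l00 x)) \<and> (\<forall>y\<in>V0. linear_on V0 (\<lambda>x. l00 x y)) \<and>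
     (\<forall>x\<in>V0. linear_on V1 (l01 x)) \<and> (\<forall>m\<in>V1. linear_on V0 (\<lambda>x. l01 x m)) \<and>
     (\<forall>m\<in>V1. linear_on V0 (l10 m)) \<and> (\<forall>x\<in>V0. linear_on V1 (\<lambda>m. l10 m x)) \<and>
     (\<forall>x\<in>V0. \<forall>y\<in>V0. linear_on V0 (l3 x y)) \<and>
     (\<forall>x\<in>V0. \<forall>z\<in>V0. linear_on V0 (\<lambda>y. l3 x y z)) \<and>
     (\<forall>y\<in>V0. \<forall>z\<in>V0. linear_on V0 (\<lambda>x. l3 x y z)) \<and>
     (\<forall>x\<in>V0. \<forall>m\<in>V1. d (l01 x m) = l00 x (d m)) \<and>
     (\<forall>x\<in>V0. \<forall>m\<in>V1. d (l10 m x) = l00 (d m) x) \<and>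
     (\<forall>m\<in>V1. \<forall>n\<in>V1. l01 (d m) n = l10 m (d n)) \<and>
     (\<forall>x\<in>V0. \<forall>y\<in>V0. \<forall>z\<in>V0.
        d (l3 x y z) = l00 x (l00 y z) - l00 (l00 x y) z - l00 y (l00 x z)) \<and>
     (\<forall>x\<in>V0. \<forall>y\<in>V0. \<forall>m\<in>V1.
        l3 x y (d m) = l01 x (l01 y m) - l01 (l00 x y) m - l01 y (l01 x m)) \<and>
     (\<forall>x\<in>V0. \<forall>y\<in>V0. \<forall>m\<in>V1.
        l3 x (d m) y = l01 x (l10 m y) - l10 (l01 x m) y - l10 m (l00 x y)) \<and>
     (\<forall>x\<in>V0. \<forall>y\<in>V0. \<forall>m\<in>V1.
        l3 (d m) x y = l10 m (l00 x y) - l10 (l10 m x) y - l01 x (l10 m y)) \<and>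
     (\<forall>w\<in>V0. \<forall>x\<in>V0. \<forall>y\<in>V0. \<forall>z\<in>V0.
        l01 w (l3 x y z) - l01 x (l3 w y z) + l01 y (l3 w x z) + l10 (l3 w x y) z
        - l3 (l00 w x) y z - l3 x (l00 w y) z - l3 x y (l00 w z)
        + l3 w (l00 x y) z + l3 w y (l00 x z) - l3 w x (l00 y z) = 0)"

definition lie_2_algebra ::
    "'a::real_vector set \<Rightarrow> 'b::real_vector set \<Rightarrow> ('a \<Rightarrow> 'b)
     \<Rightarrow> ('b \<Rightarrow> 'b \<Rightarrow> 'b) \<Rightarrow> ('b \<Rightarrow> 'a \<Rightarrow> 'a) \<Rightarrow> ('a \<Rightarrow> 'b \<Rightarrow> 'a)
     \<Rightarrow> ('b \<Rightarrow> 'b \<Rightarrow> 'b \<Rightarrow> 'a) \<Rightarrow> bool" where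
  "lie_2_algebra V1 V0 d l00 l01 l10 l3 \<longleftrightarrow>
     leibniz_2_algebra V1 V0 d l00 l01 l10 l3 \<and>
     (\<forall>x\<in>V0. \<forall>y\<in>V0. l00 x y = - l00 y x) \<and>
     (\<forall>x\<in>V0. \<forall>m\<in>V1. l01 x m = - l10 m x) \<and>
     (\<forall>x\<in>V0. \<forall>y\<in>V0. \<forall>z\<in>V0. l3 x y z = - l3 y x z) \<and>
     (\<forall>x\<in>V0. \<forall>y\<in>V0. \<forall>z\<in>V0. l3 x y z = - l3 x z y)"

end

theory Submission
  imports Defs
begin

text \<open>The anchor intertwines the skew bracket with the commutator of vector fields, so its
  kernel is an ideal, and since the commutator satisfies the Jacobi identity the kernel contains
  every Jacobiator. Granted this, all Lie 2-algebra axioms are identities valid for an arbitrary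
  skew-symmetric bilinear bracket; the only substantial one, the coherence law for l3, says that
  the Jacobiator is a Chevalley--Eilenberg cocycle.\<close>

definition jacobi_sum :: "('a::plus \<Rightarrow> 'a \<Rightarrow> 'a) \<Rightarrow> 'a \<Rightarrow> 'a \<Rightarrow> 'a \<Rightarrow> 'a" where
  "jacobi_sum b x y z = b x (b y z) + b y (b z x) + b z (b x y)"

locale skew_bilinear =
  fixes b :: "'a::real_vector \<Rightarrow> 'a \<Rightarrow> 'a"
  assumes bilinear: "real_bilinear b"
    and skew: "b x y = - b y x"
begin

lemma linear_left: "linear (\<lambda>x. b x y)" and linear_right: "linear (b x)"
  using bilinear unfolding real_bilinear_def by auto

lemma add_left: "b (x + x') y = b x y + b x' y"
  and add_right: "b x (y + y') = b x y + b x y'"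
  and scale_left: "b (r *\<^sub>R x) y = r *\<^sub>R b x y"
  and scale_right: "b x (r *\<^sub>R y) = r *\<^sub>R b x y"
  and minus_left: "b (- x) y = - b x y"
  and minus_right: "b x (- y) = - b x y"
  and diff_left: "b (x - x') y = b x y - b x' y"
  and diff_right: "b x (y - y') = b x y - b x y'"
  using real_vector.linear_add[OF linear_left] real_vector.linear_add[OF linear_right]
    real_vector.linear_scale[OF linear_left] real_vector.linear_scale[OF linear_right]
    real_vector.linear_neg[OF linear_left] real_vector.linear_neg[OF linear_right]
    real_vector.linear_diff[OF linear_left] real_vector.linear_diff[OF linear_right]
  by simp_all

lemmas bilinear_simps =
  add_left add_right scale_left scale_right minus_left minus_right diff_left diff_right

lemma jacobi_sum_eq_leibniz: "jacobi_sum b x y z = b x (b y z) - b (b x y) z - b y (b x z)"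
  unfolding jacobi_sum_def using skew[of z "b x y"] skew[of x z] by (simp add: minus_right)

lemma jacobi_sum_swap_12: "jacobi_sum b x y z = - jacobi_sum b y x z"
  unfolding jacobi_sum_def using skew[of x y] skew[of y z] skew[of x z]
  by (simp add: minus_right algebra_simps)

lemma jacobi_sum_swap_23: "jacobi_sum b x y z = - jacobi_sum b x z y"
  unfolding jacobi_sum_def using skew[of x y] skew[of y z] skew[of x z]
  by (simp add: minus_right algebra_simps)

lemma jacobi_sum_cyclic: "jacobi_sum b x y z = jacobi_sum b y z x"
  unfolding jacobi_sum_def by (simp add: ac_simps)

lemma jacobi_sum_linear:
  "jacobi_sum b (x + x') y z = jacobi_sum b x y z + jacobi_sum b x' y z"
  "jacobi_sum b y (x + x') z = jacobi_sum b y x z + jacobi_sum b y x' z"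
  "jacobi_sum b y z (x + x') = jacobi_sum b y z x + jacobi_sum b y z x'"
  "jacobi_sum b (r *\<^sub>R x) y z = r *\<^sub>R jacobi_sum b x y z"
  "jacobi_sum b y (r *\<^sub>R x) z = r *\<^sub>R jacobi_sum b y x z"
  "jacobi_sum b y z (r *\<^sub>R x) = r *\<^sub>R jacobi_sum b y z x"
  unfolding jacobi_sum_def by (simp_all add: bilinear_simps algebra_simps)

text \<open>After expansion every triple bracket cancels against another one, once the
  skew-symmetry instances below bring both to the same shape.\<close>
lemma jacobi_sum_closed:
  "b w (jacobi_sum b x y z) - b x (jacobi_sum b w y z) + b y (jacobi_sum b w x z)
   - b z (jacobi_sum b w x y)
   - jacobi_sum b (b w x) y z - jacobi_sum b x (b w y) z - jacobi_sum b x y (b w z)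
   + jacobi_sum b w (b x y) z + jacobi_sum b w y (b x z) - jacobi_sum b w x (b y z) = 0"
  using skew[of x w] skew[of y w] skew[of y x] skew[of z w] skew[of z x] skew[of z y]
    skew[of "b w x" y] skew[of "b w x" z] skew[of "b w y" x] skew[of "b w y" z]
    skew[of "b w z" x] skew[of "b w z" y] skew[of "b x y" w] skew[of "b x y" z]
    skew[of "b x y" "b w z"] skew[of "b x z" w] skew[of "b x z" y] skew[of "b x z" "b w y"]
    skew[of "b y z" w] skew[of "b y z" x] skew[of "b y z" "b w x"]
    skew[of "b w (b x y)" z] skew[of "b x (b w y)" z] skew[of "b y (b w x)" z]
    skew[of "b w (b x z)" y] skew[of "b x (b w z)" y] skew[of "b z (b w x)" y]
    skew[of "b w (b y z)" x] skew[of "b y (b w z)" x] skew[of "b z (b w y)" x]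
    skew[of "b x (b y z)" w] skew[of "b y (b x z)" w] skew[of "b z (b x y)" w]
  unfolding jacobi_sum_def by (simp add: bilinear_simps algebra_simps)

theorem lie_2_algebra_inclusion:
  assumes "subspace K"
    and ideal: "\<And>x m. m \<in> K \<Longrightarrow> b x m \<in> K"
    and jacobi: "\<And>x y z. jacobi_sum b x y z \<in> K"
  shows "lie_2_algebra K UNIV (\<lambda>m. m) b b (\<lambda>m x. - b x m) (jacobi_sum b)"
proof -
  have K_neg: "- m \<in> K" if "m \<in> K" for m
    using \<open>subspace K\<close> that by (simp add: subspace_neg)
  show ?thesis
    unfolding lie_2_algebra_def leibniz_2_algebra_def linear_on_def
    apply (intro conjI ballI allI)
    using \<open>subspace K\<close> apply (simp_all add: ideal K_neg jacobi bilinear_simps jacobi_sum_linear)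
    subgoal for x m by (simp add: skew[of m x])
    subgoal for m n by (rule skew)
    subgoal for x y z by (rule jacobi_sum_eq_leibniz)
    subgoal for x y m by (rule jacobi_sum_eq_leibniz)
    subgoal for x y m using jacobi_sum_swap_23[of x m y] jacobi_sum_eq_leibniz[of x y m] by simp
    subgoal for x y m using jacobi_sum_cyclic[of m x y] jacobi_sum_eq_leibniz[of x y m] by simp
    subgoal for w x y z using jacobi_sum_closed[of w x y z] by (simp add: algebra_simps)
    subgoal for x y by (rule skew)
    subgoal for x y z by (rule jacobi_sum_swap_12)
    subgoal for x y z by (rule jacobi_sum_swap_23)
    done
qed

end

lemma skew_bilinear_skew_bracket:
  assumes "real_bilinear circ"
  shows "skew_bilinear (skew_bracket circ)"
proof
  have "linear (\<lambda>x. skew_bracket circ x y) \<and> linear (skew_bracket circ x)" for x y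
    using assms unfolding real_bilinear_def skew_bracket_def
    by (auto intro!: real_vector.linear_compose_scale_right real_vector.linear_compose_sub)
  then show "real_bilinear (skew_bracket circ)"
    unfolding real_bilinear_def by blast
  show "skew_bracket circ x y = - skew_bracket circ y x" for x y
    unfolding skew_bracket_def by (simp add: algebra_simps)
qed

lemma of_real_half_mult_double: "of_real (1/2) * (a + a) = (a :: 'f::real_algebra_1)"
proof -
  have "of_real (1/2) * (a + a) = of_real (1/2) * (of_real 2 * a)"
    by (simp add: mult_2)
  also have "\<dots> = of_real (1/2 * 2) * a"
    by (simp only: of_real_mult mult.assoc)
  finally show ?thesis
    by simp
qed

lemma jacobiator_eq_jacobi_sum: "jacobiator circ = jacobi_sum (skew_bracket circ)"
  by (simp add: fun_eq_iff jacobiator_def jacobi_sum_def)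

lemma vf_bracket_jacobi:
  fixes X Y Z :: "'f::real_algebra \<Rightarrow> 'f"
  assumes "linear X" "linear Y" "linear Z"
  shows "vf_bracket X (vf_bracket Y Z) g + vf_bracket Y (vf_bracket Z X) g
           + vf_bracket Z (vf_bracket X Y) g = 0"
  by (simp add: vf_bracket_def real_vector.linear_diff[OF assms(1)]
      real_vector.linear_diff[OF assms(2)] real_vector.linear_diff[OF assms(3)])

context
  fixes smult :: "'f::{real_algebra_1,comm_ring_1} \<Rightarrow> 'e::real_vector \<Rightarrow> 'e"
    and pair :: "'e \<Rightarrow> 'e \<Rightarrow> 'f"
    and rho :: "'e \<Rightarrow> 'f \<Rightarrow> 'f"
  assumes vector_bundle: "courant_vector_bundle smult pair rho"
begin

lemma anchor_add: "rho (u + v) = (\<lambda>g. rho u g + rho v g)"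
  and anchor_linear: "linear (rho e)"
  using vector_bundle unfolding courant_vector_bundle_def derivation_def by auto

lemma anchor_scaleR: "rho (r *\<^sub>R e) = (\<lambda>g. of_real r * rho e g)"
  using vector_bundle unfolding courant_vector_bundle_def fun_module_def by auto

lemma anchor_diff: "rho (u - v) = (\<lambda>g. rho u g - rho v g)"
  using anchor_add[of u "- v"] anchor_scaleR[of "- 1" v] by simp

lemma anchor_zero: "rho 0 = (\<lambda>_. 0)"
  using anchor_scaleR[of 0 0] by simp

lemma subspace_anchor_kernel: "subspace {\<kappa>. rho \<kappa> = (\<lambda>_. 0)}"
  unfolding subspace_def by (simp add: anchor_zero anchor_add anchor_scaleR)

end

context
  fixes smult :: "'f::{real_algebra_1,comm_ring_1} \<Rightarrow> 'e::real_vector \<Rightarrow> 'e"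
    and pair :: "'e \<Rightarrow> 'e \<Rightarrow> 'f"
    and rho :: "'e \<Rightarrow> 'f \<Rightarrow> 'f"
    and circ :: "'e \<Rightarrow> 'e \<Rightarrow> 'e"
  assumes pre_courant: "pre_courant_algebroid smult pair rho circ"
begin

lemma pre_courant_vector_bundle: "courant_vector_bundle smult pair rho"
  and anchor_circ: "rho (circ u v) = vf_bracket (rho u) (rho v)"
  and real_bilinear_circ: "real_bilinear circ"
  using pre_courant unfolding pre_courant_algebroid_def by auto

lemma anchor_skew_bracket: "rho (skew_bracket circ u v) = vf_bracket (rho u) (rho v)"
proof
  show "rho (skew_bracket circ u v) g = vf_bracket (rho u) (rho v) g" for g
    using of_real_half_mult_double[of "vf_bracket (rho u) (rho v) g"]
    by (simp add: skew_bracket_def anchor_scaleR[OF pre_courant_vector_bundle]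
        anchor_diff[OF pre_courant_vector_bundle] anchor_circ vf_bracket_def)
qed

lemma anchor_kernel_ideal:
  assumes "rho \<kappa> = (\<lambda>_. 0)"
  shows "rho (skew_bracket circ e \<kappa>) = (\<lambda>_. 0)"
  using real_vector.linear_0[OF anchor_linear[OF pre_courant_vector_bundle]]
  by (simp add: assms anchor_skew_bracket vf_bracket_def)

lemma anchor_jacobiator: "rho (jacobiator circ x y z) = (\<lambda>_. 0)"
  using vf_bracket_jacobi[of "rho x" "rho y" "rho z"] anchor_linear[OF pre_courant_vector_bundle]
  by (simp add: jacobiator_def anchor_add[OF pre_courant_vector_bundle] anchor_skew_bracket)

end

theorem theorem4p8:
  fixes smult :: "'f::{real_algebra_1,comm_ring_1} \<Rightarrow> 'e::real_vector \<Rightarrow> 'e"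
    and pair :: "'e \<Rightarrow> 'e \<Rightarrow> 'f"
    and rho :: "'e \<Rightarrow> 'f \<Rightarrow> 'f"
    and circ :: "'e \<Rightarrow> 'e \<Rightarrow> 'e"
  assumes "pre_courant_algebroid smult pair rho circ"
  shows "lie_2_algebra {\<kappa>. rho \<kappa> = (\<lambda>_. 0)} UNIV (\<lambda>\<kappa>. \<kappa>)
           (skew_bracket circ)
           (\<lambda>e \<kappa>. skew_bracket circ e \<kappa>)
           (\<lambda>\<kappa> e. - skew_bracket circ e \<kappa>)
           (jacobiator circ)"
proof -
  interpret skew_bilinear "skew_bracket circ"
    using skew_bilinear_skew_bracket real_bilinear_circ[OF assms] .
  show ?thesis
    unfolding jacobiator_eq_jacobi_sum
  proof (rule lie_2_algebra_inclusion)
    show "subspace {\<kappa>. rho \<kappa> = (\<lambda>_. 0)}"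
      using subspace_anchor_kernel[OF pre_courant_vector_bundle[OF assms]] .
    show "skew_bracket circ e \<kappa> \<in> {\<kappa>. rho \<kappa> = (\<lambda>_. 0)}"
      if "\<kappa> \<in> {\<kappa>. rho \<kappa> = (\<lambda>_. 0)}" for e \<kappa>
      using anchor_kernel_ideal[OF assms] that by simp
    show "jacobi_sum (skew_bracket circ) x y z \<in> {\<kappa>. rho \<kappa> = (\<lambda>_. 0)}" for x y z
      using anchor_jacobiator[OF assms] by (simp add: jacobiator_eq_jacobi_sum)
  qed
qed

end
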